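(* Assume the setting described in the context, let $\gamma<\eta<\min\{\beta,\alpha\}$ with $K\,\mathrm{Lip}_u G\left(\frac{1}{\eta-\gamma}+\frac{1}{\beta-\eta}+\frac{1}{\alpha-\eta}\right)<1$, and let $M^c(\omega)=\{u_0\in H: u(\cdot,u_0,\omega)\in C_\eta\}=\{v+h^c(v,\omega):v\in H^c\}$ be the center manifold of the random equation $\frac{du}{dt}=Au+z(\theta_t\omega)u+G(\theta_t\omega,u)$. Then the random set \[ \widetilde M^c(\omega)=\{e^{z(\omega)}u: u\in M^c(\omega)\}=\{v+e^{z(\omega)}h^c(e^{-z(\omega)}v,\omega): v\in H^c\} \] is a center manifold for the stochastic evolution equation $\frac{du}{dt}=Au+F(u)+u\circ\dot W(t)$; in particular it is forward invariant under the random dynamical system $\hat u$ generated by that equation: $\hat u(t,\widetilde M^c(\omega),\omega)\subset\widetilde M^c(\theta_t\omega)$ for $t\ge0$.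
   Context: $H$ is a separable Hilbert space with norm $|\cdot|$. $A:D(A)\to H$ generates a strongly continuous semigroup $e^{At}$ satisfying an exponential trichotomy with exponents $\alpha>\gamma>0>-\gamma>-\beta$ and bound $K$: there are continuous projections $P^c,P^u,P^s$ with $P^c+P^u+P^s=\mathrm{id}$, $P^iP^j=0$ for $i\neq j$, each commuting with $e^{At}$ for $t\ge 0$; with $H^i=P^iH$, $e^{At}|_{H^i}$ is an isomorphism for $t\ge0$ (extended to $t<0$ by inversion); and $|e^{At}P^cv|\le Ke^{\gamma|t|}|P^cv|$ ($t\in\mathbb R$), $|e^{At}P^uv|\le Ke^{\alpha t}|P^uv|$ ($t\le0$), $|e^{At}P^sv|\le Ke^{-\beta t}|P^sv|$ ($t\ge0$). $F:H\to H$, $F(0)=0$, globally Lipschitz. $(\Omega,\mathcal F,\mathbb P,\{\theta_t\})$ is the Wiener shift of a two-sided scalar Wiener process $W$, restricted to a $\theta$-invariant full-measure set of paths with sublinear growth; $z(\omega)=-\mu\int_{-\infty}^0e^{\mu\tau}\omega(\tau)d\tau$ for fixed $\mu>0$, so $z(\theta_t\omega)$ is the stationary solution of $dz+\mu z\,dt=dW$. $G(\omega,u)=e^{-z(\omega)}F(e^{z(\omega)}u)$ with Lipschitz constant $\mathrm{Lip}_uG$ in $u$. $\Psi_A(t,s)=\exp[A(t-s)+\int_s^tz(\theta_r\omega)dr]$; $u(t,u_0,\omega)$ is the mild solution $u(t)=\Psi_A(t,0)u_0+\int_0^t\Psi_A(t,s)G(\theta_s\omega,u(s))ds$. $C_\eta$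 is the Banach space of $\phi\in C(\mathbb R,H)$ with $\sup_t \exp[-\eta|t|-\int_0^tz(\theta_r\omega)dr]|\phi(t)|<\infty$. The random dynamical system of the Stratonovich equation $\frac{du}{dt}=Au+F(u)+u\circ\dot W$ is $\hat u(t,v,\omega)=e^{z(\theta_t\omega)}u(t,e^{-z(\omega)}v,\omega)$. A center manifold of a random dynamical system $\phi$ is a forward invariant random set ($\phi(t,M(\omega),\omega)\subset M(\theta_t\omega)$, $t\ge0$) of the form $\{v+h(v,\omega):v\in H^c\}$ with $h(\cdot,\omega):H^c\to H^u\oplus H^s$ Lipschitz, $h(0,\omega)=0$, and $h(v,\cdot)$ measurable. *)

theory Defs
  imports "HOL-Probability.Probability"
begin

definition shift :: "real \<Rightarrow> (real \<Rightarrow> real) \<Rightarrow> (real \<Rightarrow> real)" where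
  "shift t \<omega> = (\<lambda>s. \<omega> (s + t) - \<omega> t)"

definition sublinear_paths :: "(real \<Rightarrow> real) set" where
  "sublinear_paths = {\<omega>. continuous_on UNIV \<omega> \<and> \<omega> 0 = 0 \<and>
      ((\<lambda>t. \<omega> t / t) \<longlongrightarrow> 0) at_top \<and> ((\<lambda>t. \<omega> t / t) \<longlongrightarrow> 0) at_bot}"

text \<open>P is the (restricted) two-sided Wiener measure: its sample space is a shift-invariant
  set of sublinearly growing paths, the sigma algebra is generated by the evaluations
  (trace of the Borel sets of the compact-open topology), and the coordinate process is a
  two-sided scalar Wiener process (independent centred Gaussian increments of variance t - s).\<close>
definition wiener_shift_space :: "(real \<Rightarrow> real) measure \<Rightarrow> bool" where
  "wiener_shift_space P \<longleftrightarrow> prob_space P \<and> space P \<subseteq> sublinear_paths \<and>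
     (\<forall>t. \<forall>\<omega>\<in>space P. shift t \<omega> \<in> space P) \<and>
     sets P = sigma_sets (space P) {{\<omega>\<in>space P. \<omega> t \<in> B} | t B. B \<in> sets (borel :: real measure)} \<and>
     (\<forall>s t. s < t \<longrightarrow> distributed P lborel (\<lambda>\<omega>. \<omega> t - \<omega> s)
                          (\<lambda>x. ennreal (normal_density 0 (sqrt (t - s)) x))) \<and>
     (\<forall>ts::real list. sorted ts \<longrightarrow> distinct ts \<longrightarrow>
        prob_space.indep_vars P (\<lambda>_. borel :: real measure)
           (\<lambda>i \<omega>. \<omega> (ts ! Suc i) - \<omega> (ts ! i)) {..<length ts - 1})"

text \<open>Stationary Ornstein-Uhlenbeck variable z(omega).\<close>
definition ou :: "real \<Rightarrow> (real \<Rightarrow> real) \<Rightarrow> real" where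
  "ou \<mu> \<omega> = - \<mu> * integral {..0} (\<lambda>\<tau>. exp (\<mu> * \<tau>) * \<omega> \<tau>)"

definition oint :: "real \<Rightarrow> real \<Rightarrow> (real \<Rightarrow> real) \<Rightarrow> real" where
  "oint a b f = (if a \<le> b then integral {a..b} f else - integral {b..a} f)"

definition C0_semigroup :: "(real \<Rightarrow> 'a::real_normed_vector \<Rightarrow> 'a) \<Rightarrow> bool" where
  "C0_semigroup T \<longleftrightarrow> (\<forall>t\<ge>0. bounded_linear (T t)) \<and> T 0 = id \<and>
     (\<forall>s\<ge>0. \<forall>t\<ge>0. T (s + t) = T s \<circ> T t) \<and> (\<forall>x. continuous_on {0..} (\<lambda>t. T t x))"

definition generates :: "'a::real_normed_vector set \<Rightarrow> ('a \<Rightarrow> 'a) \<Rightarrow> (real \<Rightarrow> 'a \<Rightarrow> 'a) \<Rightarrow> bool" where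
  "generates D A T \<longleftrightarrow> C0_semigroup T \<and>
     D = {x. \<exists>y. ((\<lambda>t. (T t x - x) /\<^sub>R t) \<longlongrightarrow> y) (at_right 0)} \<and>
     (\<forall>x\<in>D. ((\<lambda>t. (T t x - x) /\<^sub>R t) \<longlongrightarrow> A x) (at_right 0))"

definition ext_group :: "(real \<Rightarrow> 'a \<Rightarrow> 'a) \<Rightarrow> ('a \<Rightarrow> 'a) \<Rightarrow> real \<Rightarrow> 'a \<Rightarrow> 'a" where
  "ext_group T P t v = (if 0 \<le> t then T t v else (THE w. w \<in> range P \<and> T (- t) w = v))"

definition exp_trichotomy :: "(real \<Rightarrow> 'a::real_normed_vector \<Rightarrow> 'a) \<Rightarrow> ('a \<Rightarrow> 'a) \<Rightarrow> ('a \<Rightarrow> 'a) \<Rightarrow>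
    ('a \<Rightarrow> 'a) \<Rightarrow> real \<Rightarrow> real \<Rightarrow> real \<Rightarrow> real \<Rightarrow> bool" where
  "exp_trichotomy T Pc Pu Ps \<alpha> \<beta> \<gamma> K \<longleftrightarrow> \<alpha> > \<gamma> \<and> \<gamma> > 0 \<and> - \<gamma> > - \<beta> \<and>
     bounded_linear Pc \<and> bounded_linear Pu \<and> bounded_linear Ps \<and>
     (\<forall>x. Pc x + Pu x + Ps x = x) \<and>
     (\<forall>x. Pc (Pu x) = 0 \<and> Pc (Ps x) = 0 \<and> Pu (Pc x) = 0 \<and> Pu (Ps x) = 0 \<and>
          Ps (Pc x) = 0 \<and> Ps (Pu x) = 0) \<and>
     (\<forall>t\<ge>0. \<forall>x. T t (Pc x) = Pc (T t x) \<and> T t (Pu x) = Pu (T t x) \<and> T t (Ps x) = Ps (T t x)) \<and>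
     (\<forall>t\<ge>0. bij_betw (T t) (range Pc) (range Pc) \<and> bij_betw (T t) (range Pu) (range Pu)) \<and>
     (\<forall>t v. norm (ext_group T Pc t (Pc v)) \<le> K * exp (\<gamma> * \<bar>t\<bar>) * norm (Pc v)) \<and>
     (\<forall>t\<le>0. \<forall>v. norm (ext_group T Pu t (Pu v)) \<le> K * exp (\<alpha> * t) * norm (Pu v)) \<and>
     (\<forall>t\<ge>0. \<forall>v. norm (T t (Ps v)) \<le> K * exp (- \<beta> * t) * norm (Ps v))"

definition Gfun :: "real \<Rightarrow> ('a::real_normed_vector \<Rightarrow> 'a) \<Rightarrow> (real \<Rightarrow> real) \<Rightarrow> 'a \<Rightarrow> 'a" where
  "Gfun \<mu> F \<omega> u = exp (- ou \<mu> \<omega>) *\<^sub>R F (exp (ou \<mu> \<omega>) *\<^sub>R u)"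

definition Psi :: "(real \<Rightarrow> 'a::real_normed_vector \<Rightarrow> 'a) \<Rightarrow> real \<Rightarrow> (real \<Rightarrow> real) \<Rightarrow> real \<Rightarrow> real \<Rightarrow> 'a \<Rightarrow> 'a" where
  "Psi T \<mu> \<omega> t s v = exp (oint s t (\<lambda>r. ou \<mu> (shift r \<omega>))) *\<^sub>R T (t - s) v"

definition mild_fwd :: "(real \<Rightarrow> 'a::banach \<Rightarrow> 'a) \<Rightarrow> real \<Rightarrow> ('a \<Rightarrow> 'a) \<Rightarrow> (real \<Rightarrow> real) \<Rightarrow>
    'a \<Rightarrow> (real \<Rightarrow> 'a) \<Rightarrow> bool" where
  "mild_fwd T \<mu> F \<omega> u0 u \<longleftrightarrow> continuous_on {0..} u \<and>
     (\<forall>t\<ge>0. u t = Psi T \<mu> \<omega> t 0 u0 +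
        integral {0..t} (\<lambda>s. Psi T \<mu> \<omega> t s (Gfun \<mu> F (shift s \<omega>) (u s))))"

definition usol :: "(real \<Rightarrow> 'a::banach \<Rightarrow> 'a) \<Rightarrow> real \<Rightarrow> ('a \<Rightarrow> 'a) \<Rightarrow> real \<Rightarrow> 'a \<Rightarrow> (real \<Rightarrow> real) \<Rightarrow> 'a" where
  "usol T \<mu> F t u0 \<omega> = (THE x. \<exists>u. mild_fwd T \<mu> F \<omega> u0 u \<and> x = u t)"

text \<open>The random dynamical system of the Stratonovich equation.\<close>
definition uhat :: "(real \<Rightarrow> 'a::banach \<Rightarrow> 'a) \<Rightarrow> real \<Rightarrow> ('a \<Rightarrow> 'a) \<Rightarrow> real \<Rightarrow> 'a \<Rightarrow> (real \<Rightarrow> real) \<Rightarrow> 'a" where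
  "uhat T \<mu> F t v \<omega> = exp (ou \<mu> (shift t \<omega>)) *\<^sub>R usol T \<mu> F t (exp (- ou \<mu> \<omega>) *\<^sub>R v) \<omega>"

definition Ceta :: "real \<Rightarrow> real \<Rightarrow> (real \<Rightarrow> real) \<Rightarrow> (real \<Rightarrow> 'a::real_normed_vector) set" where
  "Ceta \<mu> \<eta> \<omega> = {\<phi>. continuous_on UNIV \<phi> \<and>
      bdd_above (range (\<lambda>t. exp (- \<eta> * \<bar>t\<bar> - oint 0 t (\<lambda>r. ou \<mu> (shift r \<omega>))) * norm (\<phi> t)))}"

definition mild_whole :: "(real \<Rightarrow> 'a::banach \<Rightarrow> 'a) \<Rightarrow> real \<Rightarrow> ('a \<Rightarrow> 'a) \<Rightarrow> (real \<Rightarrow> real) \<Rightarrow>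
    (real \<Rightarrow> 'a) \<Rightarrow> bool" where
  "mild_whole T \<mu> F \<omega> \<phi> \<longleftrightarrow> continuous_on UNIV \<phi> \<and>
     (\<forall>s t. s \<le> t \<longrightarrow> \<phi> t = Psi T \<mu> \<omega> t s (\<phi> s) +
        integral {s..t} (\<lambda>r. Psi T \<mu> \<omega> t r (Gfun \<mu> F (shift r \<omega>) (\<phi> r))))"

definition Mcenter :: "(real \<Rightarrow> 'a::banach \<Rightarrow> 'a) \<Rightarrow> real \<Rightarrow> ('a \<Rightarrow> 'a) \<Rightarrow> real \<Rightarrow> (real \<Rightarrow> real) \<Rightarrow> 'a set" where
  "Mcenter T \<mu> F \<eta> \<omega> = {u0. \<exists>\<phi>\<in>Ceta \<mu> \<eta> \<omega>. \<phi> 0 = u0 \<and> mild_whole T \<mu> F \<omega> \<phi>}"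

definition cm_graph :: "(real \<Rightarrow> real) measure \<Rightarrow> ('a::real_normed_vector \<Rightarrow> 'a) \<Rightarrow> ('a \<Rightarrow> 'a) \<Rightarrow> ('a \<Rightarrow> 'a) \<Rightarrow>
    (real \<Rightarrow> 'a \<Rightarrow> (real \<Rightarrow> real) \<Rightarrow> 'a) \<Rightarrow> ('a \<Rightarrow> (real \<Rightarrow> real) \<Rightarrow> 'a) \<Rightarrow> bool" where
  "cm_graph P Pc Pu Ps \<phi> h \<longleftrightarrow>
     (let M = (\<lambda>\<omega>. {v + h v \<omega> | v. v \<in> range Pc}) in
       (\<forall>\<omega>\<in>space P. (\<forall>v\<in>range Pc. h v \<omega> \<in> range (\<lambda>x. Pu x + Ps x)) \<and>
           (\<exists>L. L-lipschitz_on (range Pc) (\<lambda>v. h v \<omega>)) \<and> h 0 \<omega> = 0) \<and>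
       (\<forall>v\<in>range Pc. (\<lambda>\<omega>. h v \<omega>) \<in> borel_measurable P) \<and>
       (\<forall>x. (\<lambda>\<omega>. infdist x (M \<omega>)) \<in> borel_measurable P) \<and>
       (\<forall>\<omega>\<in>space P. \<forall>t\<ge>0. (\<lambda>x. \<phi> t x \<omega>) ` M \<omega> \<subseteq> M (shift t \<omega>)))"

end

theory Submission
  imports Defs
begin

text \<open>Multiplication by the positive random scalar e^z(\<omega>) conjugates the random equation to the
  Stratonovich equation: uhat(t, v, \<omega>) = e^z(\<theta>_t \<omega>) u(t, e^-z(\<omega>) v, \<omega>). Such a fibrewise linear
  conjugacy commutes with the spectral projections, so it maps the graph of h over H^c to the graph
  of v \<mapsto> e^z h(e^-z v), keeps the Lipschitz property and h(0) = 0, scales distances by e^z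
  and transports forward invariance. The only genuinely new ingredient is the measurability of z,
  which follows from the joint measurability of (\<omega>, \<tau>) \<mapsto> \<omega>(\<tau>) for continuous paths and
  Fubini.\<close>

lemma floor_grid_LIMSEQ:
  fixes c :: real
  shows "(\<lambda>n. real_of_int \<lfloor>real (Suc n) * c\<rfloor> / real (Suc n)) \<longlonglongrightarrow> c"
proof (rule LIM_zero_cancel, rule Lim_null_comparison)
  show "\<forall>\<^sub>F n in sequentially.
      norm (real_of_int \<lfloor>real (Suc n) * c\<rfloor> / real (Suc n) - c) \<le> 1 / real (Suc n)"
  proof (intro always_eventually allI)
    fix n
    have "real_of_int \<lfloor>real (Suc n) * c\<rfloor> / real (Suc n) - c
        = (real_of_int \<lfloor>real (Suc n) * c\<rfloor> - real (Suc n) * c) / real (Suc n)"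
      by (simp add: field_simps)
    then have "norm (real_of_int \<lfloor>real (Suc n) * c\<rfloor> / real (Suc n) - c)
        = \<bar>real_of_int \<lfloor>real (Suc n) * c\<rfloor> - real (Suc n) * c\<bar> / real (Suc n)"
      by simp
    also have "\<dots> \<le> 1 / real (Suc n)"
      by (intro divide_right_mono) linarith+
    finally show "norm (real_of_int \<lfloor>real (Suc n) * c\<rfloor> / real (Suc n) - c) \<le> 1 / real (Suc n)" .
  qed
  show "(\<lambda>n. 1 / real (Suc n)) \<longlonglongrightarrow> 0"
    using LIMSEQ_inverse_real_of_nat by (simp add: inverse_eq_divide)
qed

text \<open>Approximate c x by the countably-valued grid points \<lfloor>(n+1) c x\<rfloor> / (n+1).\<close>
lemma borel_measurable_continuous_param:
  fixes f :: "real \<Rightarrow> 'm \<Rightarrow> 'c::metric_space"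
  assumes c: "c \<in> borel_measurable M"
    and f: "\<And>q. f q \<in> borel_measurable M"
    and cont: "\<And>x. x \<in> space M \<Longrightarrow> continuous_on UNIV (\<lambda>q. f q x)"
  shows "(\<lambda>x. f (c x) x) \<in> borel_measurable M"
proof (rule borel_measurable_LIMSEQ_metric)
  fix n :: nat
  have "(\<lambda>x. \<lfloor>real (Suc n) * c x\<rfloor>) \<in> measurable M (count_space UNIV)"
    using c by measurable
  then show "(\<lambda>x. f (real_of_int \<lfloor>real (Suc n) * c x\<rfloor> / real (Suc n)) x) \<in> borel_measurable M"
    by (rule measurable_compose_countable[where f="\<lambda>i. f (real_of_int i / real (Suc n))", OF f])
next
  fix x assume "x \<in> space M"
  then have "isCont (\<lambda>q. f q x) (c x)"
    using cont by (simp add: continuous_on_eq_continuous_at)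
  then show "(\<lambda>n. f (real_of_int \<lfloor>real (Suc n) * c x\<rfloor> / real (Suc n)) x) \<longlonglongrightarrow> f (c x) x"
    by (rule isCont_tendsto_compose) (rule floor_grid_LIMSEQ)
qed

lemma wiener_shift_space_eval_measurable:
  assumes "wiener_shift_space P"
  shows "(\<lambda>\<omega>. \<omega> t) \<in> borel_measurable P"
proof (rule measurableI)
  fix B :: "real set" assume "B \<in> sets borel"
  then have "{\<omega>\<in>space P. \<omega> t \<in> B} \<in>
      sigma_sets (space P) {{\<omega>\<in>space P. \<omega> t \<in> B} | t B. B \<in> sets (borel :: real measure)}"
    by (intro sigma_sets.Basic) blast
  then show "(\<lambda>\<omega>. \<omega> t) -` B \<inter> space P \<in> sets P"
    using assms unfolding wiener_shift_space_def by (simp add: vimage_def Int_def conj_commute)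
qed simp

lemma wiener_shift_space_eval_pair_measurable:
  assumes w: "wiener_shift_space P"
  shows "(\<lambda>(\<omega>, t). \<omega> t) \<in> borel_measurable (P \<Otimes>\<^sub>M lborel)"
proof -
  have "(\<lambda>p. fst p (snd p)) \<in> borel_measurable (P \<Otimes>\<^sub>M lborel)"
  proof (rule borel_measurable_continuous_param[where f="\<lambda>t p. fst p t" and c=snd])
    fix t show "(\<lambda>p. fst p t) \<in> borel_measurable (P \<Otimes>\<^sub>M lborel)"
      by (rule measurable_compose[OF measurable_fst wiener_shift_space_eval_measurable[OF w]])
  next
    fix p assume "p \<in> space (P \<Otimes>\<^sub>M lborel)"
    then have "fst p \<in> space P" by (simp add: space_pair_measure mem_Times_iff)
    then show "continuous_on UNIV (fst p)"
      using w unfolding wiener_shift_space_def sublinear_paths_def by auto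
  qed simp
  then show ?thesis by (simp add: case_prod_unfold)
qed

lemma tendsto_mult_exp_at_bot:
  fixes c :: real assumes c: "c > 0"
  shows "((\<lambda>\<tau>. \<tau> * exp (c * \<tau>)) \<longlongrightarrow> 0) at_bot"
proof -
  have "filterlim (\<lambda>\<tau>. c * (- \<tau>)) at_top at_bot"
    by (rule filterlim_tendsto_pos_mult_at_top[OF tendsto_const c filterlim_uminus_at_top_at_bot])
  then have "((\<lambda>\<tau>. (c * (- \<tau>)) ^ 1 / exp (c * (- \<tau>))) \<longlongrightarrow> 0) at_bot"
    by (rule filterlim_compose[OF tendsto_power_div_exp_0])
  then have "((\<lambda>\<tau>. - (1 / c) * ((c * (- \<tau>)) ^ 1 / exp (c * (- \<tau>)))) \<longlongrightarrow> - (1 / c) * 0) at_bot"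
    by (intro tendsto_mult tendsto_const)
  moreover have "- (1 / c) * ((c * (- \<tau>)) ^ 1 / exp (c * (- \<tau>))) = \<tau> * exp (c * \<tau>)" for \<tau>
    using c by (simp add: field_simps exp_minus)
  ultimately show ?thesis by simp
qed

lemma exp_absolutely_integrable_on_atMost_0:
  fixes c :: real assumes c: "c > 0"
  shows "(\<lambda>x. exp (c * x)) absolutely_integrable_on {..0}"
proof -
  have "(\<lambda>x. exp (- c * x)) integrable_on {0..}"
    using integrable_on_exp_minus_to_infinity[of c 0] c by simp
  then have "(\<lambda>x. exp (c * (- x))) absolutely_integrable_on {0..} \<and>
      integral {0..} (\<lambda>x. exp (c * (- x))) = integral {0..} (\<lambda>x. exp (c * (- x)))"
    by (simp add: nonnegative_absolutely_integrable_1)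
  then show ?thesis
    by (subst (asm) has_absolute_integral_reflect_real) auto
qed

lemma sublinear_path_exp_weighted_bounded:
  fixes c :: real
  assumes w: "\<omega> \<in> sublinear_paths" and c: "c > 0"
  obtains B where "\<And>\<tau>. \<tau> \<le> 0 \<Longrightarrow> \<bar>exp (c * \<tau>) * \<omega> \<tau>\<bar> \<le> B"
proof -
  have cont: "continuous_on UNIV \<omega>" and lim: "((\<lambda>t. \<omega> t / t) \<longlongrightarrow> 0) at_bot"
    using w unfolding sublinear_paths_def by auto
  have "((\<lambda>\<tau>. (\<omega> \<tau> / \<tau>) * (\<tau> * exp (c * \<tau>))) \<longlongrightarrow> 0 * 0) at_bot"
    by (intro tendsto_mult lim tendsto_mult_exp_at_bot c)
  moreover have "\<forall>\<^sub>F \<tau> in at_bot. (\<omega> \<tau> / \<tau>) * (\<tau> * exp (c * \<tau>)) = exp (c * \<tau>) * \<omega> \<tau>"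
    unfolding eventually_at_bot_linorder by (rule exI[of _ "-1"]) auto
  ultimately have "((\<lambda>\<tau>. exp (c * \<tau>) * \<omega> \<tau>) \<longlongrightarrow> 0) at_bot"
    by (simp add: Lim_transform_eventually)
  then have "\<forall>\<^sub>F \<tau> in at_bot. dist (exp (c * \<tau>) * \<omega> \<tau>) 0 < 1"
    by (rule tendstoD) simp
  then obtain R where R: "\<And>\<tau>. \<tau> \<le> R \<Longrightarrow> \<bar>exp (c * \<tau>) * \<omega> \<tau>\<bar> < 1"
    unfolding eventually_at_bot_linorder by auto
  have "compact ((\<lambda>\<tau>. exp (c * \<tau>) * \<omega> \<tau>) ` {R..0})"
    by (intro compact_continuous_image continuous_intros continuous_on_subset[OF cont]) auto
  then obtain B where B: "\<And>y. y \<in> (\<lambda>\<tau>. exp (c * \<tau>) * \<omega> \<tau>) ` {R..0} \<Longrightarrow> norm y \<le> B"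
    using compact_imp_bounded bounded_iff by metis
  show ?thesis
  proof
    fix \<tau> :: real assume "\<tau> \<le> 0"
    then show "\<bar>exp (c * \<tau>) * \<omega> \<tau>\<bar> \<le> max 1 B"
      using R[of \<tau>] B[of "exp (c * \<tau>) * \<omega> \<tau>"] by (cases "\<tau> \<le> R") auto
  qed
qed

text \<open>Half of the exponential weight already keeps the sublinearly growing path bounded; the
  other half is integrable.\<close>
lemma sublinear_path_exp_weighted_integrable:
  fixes \<mu> :: real
  assumes w: "\<omega> \<in> sublinear_paths" and mu: "\<mu> > 0"
  shows "(\<lambda>\<tau>. exp (\<mu> * \<tau>) * \<omega> \<tau>) absolutely_integrable_on {..0}"
proof -
  obtain B where B: "\<And>\<tau>. \<tau> \<le> 0 \<Longrightarrow> \<bar>exp (\<mu> / 2 * \<tau>) * \<omega> \<tau>\<bar> \<le> B"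
    using sublinear_path_exp_weighted_bounded[OF w] mu by (metis half_gt_zero)
  show ?thesis
  proof (rule measurable_bounded_by_integrable_imp_absolutely_integrable
      [where g="\<lambda>\<tau>. B * exp (\<mu> / 2 * \<tau>)"])
    have "continuous_on UNIV \<omega>" using w unfolding sublinear_paths_def by auto
    then show "(\<lambda>\<tau>. exp (\<mu> * \<tau>) * \<omega> \<tau>) \<in> borel_measurable (lebesgue_on {..0})"
      by (intro continuous_imp_measurable_on_sets_lebesgue continuous_intros)
        (auto intro: continuous_on_subset)
    have "(\<lambda>\<tau>. exp (\<mu> / 2 * \<tau>)) integrable_on {..0}"
      using exp_absolutely_integrable_on_atMost_0[of "\<mu> / 2"] mu set_lebesgue_integral_eq_integral(1)
      by auto
    then show "(\<lambda>\<tau>. B * exp (\<mu> / 2 * \<tau>)) integrable_on {..0}"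
      by (rule integrable_on_mult_right)
    fix \<tau> :: real assume "\<tau> \<in> {..0}"
    then have "\<bar>exp (\<mu> / 2 * \<tau>) * \<omega> \<tau>\<bar> \<le> B" using B by simp
    have "norm (exp (\<mu> * \<tau>) * \<omega> \<tau>) = exp (\<mu> / 2 * \<tau>) * \<bar>exp (\<mu> / 2 * \<tau>) * \<omega> \<tau>\<bar>"
      by (simp add: abs_mult mult.assoc[symmetric] exp_add[symmetric])
    also have "\<dots> \<le> B * exp (\<mu> / 2 * \<tau>)"
      using \<open>\<bar>exp (\<mu> / 2 * \<tau>) * \<omega> \<tau>\<bar> \<le> B\<close> by (simp add: mult.commute)
    finally show "norm (exp (\<mu> * \<tau>) * \<omega> \<tau>) \<le> B * exp (\<mu> / 2 * \<tau>)" .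
  qed simp
qed

lemma ou_borel_measurable:
  assumes w: "wiener_shift_space P" and mu: "\<mu> > 0"
  shows "ou \<mu> \<in> borel_measurable P"
proof -
  let ?f = "\<lambda>\<omega> \<tau>. indicator {..0} \<tau> *\<^sub>R (exp (\<mu> * \<tau>) * \<omega> \<tau>)"
  have ou_eq: "ou \<mu> \<omega> = - \<mu> * (\<integral>\<tau>. ?f \<omega> \<tau> \<partial>lborel)" if "\<omega> \<in> space P" for \<omega>
  proof -
    have sl: "\<omega> \<in> sublinear_paths" using that w unfolding wiener_shift_space_def by auto
    then have "\<omega> \<in> borel_measurable borel"
      unfolding sublinear_paths_def by (auto intro: borel_measurable_continuous_onI)
    then have "(\<integral>\<tau>. ?f \<omega> \<tau> \<partial>lebesgue) = (\<integral>\<tau>. ?f \<omega> \<tau> \<partial>lborel)"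
      by (intro integral_completion) measurable
    moreover have "integral {..0} (\<lambda>\<tau>. exp (\<mu> * \<tau>) * \<omega> \<tau>) = (\<integral>\<tau>. ?f \<omega> \<tau> \<partial>lebesgue)"
      using set_lebesgue_integral_eq_integral(2)[OF sublinear_path_exp_weighted_integrable[OF sl mu]]
      by (simp add: set_lebesgue_integral_def)
    ultimately show ?thesis unfolding ou_def by simp
  qed
  have "case_prod ?f \<in> borel_measurable (P \<Otimes>\<^sub>M lborel)"
    using wiener_shift_space_eval_pair_measurable[OF w] by (simp add: case_prod_unfold) measurable
  then have "(\<lambda>\<omega>. - \<mu> * (\<integral>\<tau>. ?f \<omega> \<tau> \<partial>lborel)) \<in> borel_measurable P"
    by (intro borel_measurable_times borel_measurable_const lborel.borel_measurable_lebesgue_integral)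
  then show ?thesis using ou_eq by (simp cong: measurable_cong)
qed

lemma infdist_scaleR_le:
  fixes x :: "'a::real_normed_vector"
  assumes c: "c > 0"
  shows "infdist (c *\<^sub>R x) ((\<lambda>y. c *\<^sub>R y) ` S) \<le> c * infdist x S"
proof (cases "S = {}")
  case False
  have "infdist (c *\<^sub>R x) ((\<lambda>y. c *\<^sub>R y) ` S) / c \<le> (INF a\<in>S. dist x a)"
  proof (rule cINF_greatest[OF False])
    fix a assume "a \<in> S"
    then have "infdist (c *\<^sub>R x) ((\<lambda>y. c *\<^sub>R y) ` S) \<le> dist (c *\<^sub>R x) (c *\<^sub>R a)"
      by (intro infdist_le imageI)
    also have "\<dots> = c * dist x a"
      using c by (simp add: dist_norm scaleR_diff_right[symmetric])
    finally show "infdist (c *\<^sub>R x) ((\<lambda>y. c *\<^sub>R y) ` S) / c \<le> dist x a"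
      using c by (simp add: field_simps)
  qed
  then show ?thesis using c False by (simp add: infdist_notempty field_simps)
qed (simp add: infdist_def)

lemma infdist_scaleR:
  fixes x :: "'a::real_normed_vector"
  assumes c: "c > 0"
  shows "infdist (c *\<^sub>R x) ((\<lambda>y. c *\<^sub>R y) ` S) = c * infdist x S"
proof (rule antisym)
  have "infdist x S = infdist (inverse c *\<^sub>R (c *\<^sub>R x)) ((\<lambda>y. inverse c *\<^sub>R y) ` (\<lambda>y. c *\<^sub>R y) ` S)"
    using c by (simp add: image_image)
  also have "\<dots> \<le> inverse c * infdist (c *\<^sub>R x) ((\<lambda>y. c *\<^sub>R y) ` S)"
    using c by (intro infdist_scaleR_le) simp
  finally show "c * infdist x S \<le> infdist (c *\<^sub>R x) ((\<lambda>y. c *\<^sub>R y) ` S)"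
    using c by (simp add: field_simps)
qed (rule infdist_scaleR_le[OF c])

lemma scaleR_image_graph:
  fixes Pc h :: "'a::real_normed_vector \<Rightarrow> 'a"
  assumes "bounded_linear Pc" and e: "e \<noteq> 0"
  shows "(\<lambda>x. e *\<^sub>R x) ` {v + h v | v. v \<in> range Pc} =
    {v + e *\<^sub>R h (inverse e *\<^sub>R v) | v. v \<in> range Pc}"
proof -
  interpret bounded_linear Pc by fact
  show ?thesis
  proof (intro set_eqI iffI)
    fix x assume "x \<in> (\<lambda>x. e *\<^sub>R x) ` {v + h v | v. v \<in> range Pc}"
    then obtain y where "x = e *\<^sub>R (Pc y + h (Pc y))" by auto
    then have "x = Pc (e *\<^sub>R y) + e *\<^sub>R h (inverse e *\<^sub>R Pc (e *\<^sub>R y))"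
      using e by (simp add: scaleR scaleR_add_right)
    then show "x \<in> {v + e *\<^sub>R h (inverse e *\<^sub>R v) | v. v \<in> range Pc}" by blast
  next
    fix x assume "x \<in> {v + e *\<^sub>R h (inverse e *\<^sub>R v) | v. v \<in> range Pc}"
    then obtain y where "x = Pc y + e *\<^sub>R h (inverse e *\<^sub>R Pc y)" by auto
    then have "x = e *\<^sub>R (Pc (inverse e *\<^sub>R y) + h (Pc (inverse e *\<^sub>R y)))"
      using e by (simp add: scaleR scaleR_add_right)
    then show "x \<in> (\<lambda>x. e *\<^sub>R x) ` {v + h v | v. v \<in> range Pc}" by blast
  qed
qed

lemma lipschitz_on_scaleR_conjugate:
  fixes f :: "'a::real_normed_vector \<Rightarrow> 'b::real_normed_vector"
  assumes f: "L-lipschitz_on S f" and e: "e > 0"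
    and S: "\<And>v. v \<in> S \<Longrightarrow> inverse e *\<^sub>R v \<in> S"
  shows "L-lipschitz_on S (\<lambda>v. e *\<^sub>R f (inverse e *\<^sub>R v))"
proof (rule lipschitz_onI)
  fix v w assume v: "v \<in> S" and w: "w \<in> S"
  have "dist (e *\<^sub>R f (inverse e *\<^sub>R v)) (e *\<^sub>R f (inverse e *\<^sub>R w))
      = e * dist (f (inverse e *\<^sub>R v)) (f (inverse e *\<^sub>R w))"
    using e by (simp add: dist_norm scaleR_diff_right[symmetric])
  also have "\<dots> \<le> e * (L * dist (inverse e *\<^sub>R v) (inverse e *\<^sub>R w))"
    using lipschitz_onD[OF f S[OF v] S[OF w]] e by simp
  also have "\<dots> = L * dist v w"
    using e by (simp add: dist_norm scaleR_diff_right[symmetric])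
  finally show "dist (e *\<^sub>R f (inverse e *\<^sub>R v)) (e *\<^sub>R f (inverse e *\<^sub>R w)) \<le> L * dist v w" .
qed (rule lipschitz_on_nonneg[OF f])

lemma borel_measurable_scaleR_conjugate:
  fixes h :: "'a::real_normed_vector \<Rightarrow> 'm \<Rightarrow> 'b::real_normed_vector"
  assumes z: "z \<in> borel_measurable M"
    and h: "\<And>v. v \<in> S \<Longrightarrow> (\<lambda>\<omega>. h v \<omega>) \<in> borel_measurable M"
    and cont: "\<And>\<omega>. \<omega> \<in> space M \<Longrightarrow> continuous_on S (\<lambda>v. h v \<omega>)"
    and cone: "\<And>q. q *\<^sub>R v \<in> S"
  shows "(\<lambda>\<omega>. exp (z \<omega>) *\<^sub>R h (exp (- z \<omega>) *\<^sub>R v) \<omega>) \<in> borel_measurable M"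
proof (rule borel_measurable_continuous_param[where f="\<lambda>q \<omega>. exp q *\<^sub>R h (exp (- q) *\<^sub>R v) \<omega>", OF z])
  fix q show "(\<lambda>\<omega>. exp q *\<^sub>R h (exp (- q) *\<^sub>R v) \<omega>) \<in> borel_measurable M"
    using h[OF cone] by measurable
next
  fix \<omega> assume "\<omega> \<in> space M"
  then show "continuous_on UNIV (\<lambda>q. exp q *\<^sub>R h (exp (- q) *\<^sub>R v) \<omega>)"
    using cone by (intro continuous_intros continuous_on_compose2[OF cont]) auto
qed

lemma borel_measurable_infdist_scaleR_image:
  fixes S :: "'m \<Rightarrow> 'a::real_normed_vector set"
  assumes z: "z \<in> borel_measurable M"
    and S: "\<And>x. (\<lambda>\<omega>. infdist x (S \<omega>)) \<in> borel_measurable M"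
  shows "(\<lambda>\<omega>. infdist x ((\<lambda>y. exp (z \<omega>) *\<^sub>R y) ` S \<omega>)) \<in> borel_measurable M"
proof -
  have "infdist x ((\<lambda>y. exp (z \<omega>) *\<^sub>R y) ` S \<omega>) = exp (z \<omega>) * infdist (exp (- z \<omega>) *\<^sub>R x) (S \<omega>)"
    for \<omega>
    using infdist_scaleR[of "exp (z \<omega>)" "exp (- z \<omega>) *\<^sub>R x" "S \<omega>"] by (simp add: exp_minus)
  moreover have "(\<lambda>\<omega>. exp (z \<omega>) * infdist (exp (- z \<omega>) *\<^sub>R x) (S \<omega>)) \<in> borel_measurable M"
  proof (rule borel_measurable_continuous_param
      [where f="\<lambda>q \<omega>. exp q * infdist (exp (- q) *\<^sub>R x) (S \<omega>)", OF z])
    fix q show "(\<lambda>\<omega>. exp q * infdist (exp (- q) *\<^sub>R x) (S \<omega>)) \<in> borel_measurable M"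
      using S by measurable
  qed (intro continuous_intros)
  ultimately show ?thesis by simp
qed

lemma cm_graph_conjugate_scaleR:
  fixes Pc Pu Ps :: "'a::real_normed_vector \<Rightarrow> 'a"
  assumes "bounded_linear Pc" "bounded_linear Pu" "bounded_linear Ps"
    and z: "z \<in> borel_measurable P"
    and cm: "cm_graph P Pc Pu Ps \<phi> h"
  shows "cm_graph P Pc Pu Ps (\<lambda>t v \<omega>. exp (z (shift t \<omega>)) *\<^sub>R \<phi> t (exp (- z \<omega>) *\<^sub>R v) \<omega>)
    (\<lambda>v \<omega>. exp (z \<omega>) *\<^sub>R h (exp (- z \<omega>) *\<^sub>R v) \<omega>)"
proof -
  interpret Pc: bounded_linear Pc by fact
  interpret Pu: bounded_linear Pu by fact
  interpret Ps: bounded_linear Ps by fact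
  let ?M = "\<lambda>\<omega>. {v + h v \<omega> | v. v \<in> range Pc}"
  let ?h' = "\<lambda>v \<omega>. exp (z \<omega>) *\<^sub>R h (exp (- z \<omega>) *\<^sub>R v) \<omega>"
  have fibre: "\<And>\<omega>. \<omega> \<in> space P \<Longrightarrow> (\<forall>v\<in>range Pc. h v \<omega> \<in> range (\<lambda>x. Pu x + Ps x)) \<and>
      (\<exists>L. L-lipschitz_on (range Pc) (\<lambda>v. h v \<omega>)) \<and> h 0 \<omega> = 0"
    and meas: "\<And>v. v \<in> range Pc \<Longrightarrow> (\<lambda>\<omega>. h v \<omega>) \<in> borel_measurable P"
    and dist: "\<And>x. (\<lambda>\<omega>. infdist x (?M \<omega>)) \<in> borel_measurable P"
    and inv: "\<And>\<omega> t. \<omega> \<in> space P \<Longrightarrow> t \<ge> 0 \<Longrightarrow> (\<lambda>x. \<phi> t x \<omega>) ` ?M \<omega> \<subseteq> ?M (shift t \<omega>)"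
    using cm unfolding cm_graph_def Let_def by auto
  have cone: "\<And>q v. v \<in> range Pc \<Longrightarrow> q *\<^sub>R v \<in> range Pc"
    by (auto simp: Pc.scaleR[symmetric])
  have graph: "{v + ?h' v \<omega> | v. v \<in> range Pc} = (\<lambda>x. exp (z \<omega>) *\<^sub>R x) ` ?M \<omega>" for \<omega>
    using scaleR_image_graph[OF \<open>bounded_linear Pc\<close>, of "exp (z \<omega>)" "\<lambda>v. h v \<omega>"]
    by (simp add: exp_minus)
  show ?thesis
    unfolding cm_graph_def Let_def graph
  proof (intro conjI ballI allI impI)
    fix \<omega> v assume "\<omega> \<in> space P" "v \<in> range Pc"
    then obtain y where "h (exp (- z \<omega>) *\<^sub>R v) \<omega> = Pu y + Ps y" using fibre cone by blast
    then have "?h' v \<omega> = Pu (exp (z \<omega>) *\<^sub>R y) + Ps (exp (z \<omega>) *\<^sub>R y)"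
      by (simp add: Pu.scaleR Ps.scaleR scaleR_add_right)
    then show "?h' v \<omega> \<in> range (\<lambda>x. Pu x + Ps x)" by blast
  next
    fix \<omega> assume "\<omega> \<in> space P"
    then obtain L where "L-lipschitz_on (range Pc) (\<lambda>v. h v \<omega>)" using fibre by blast
    then have "L-lipschitz_on (range Pc) (\<lambda>v. exp (z \<omega>) *\<^sub>R h (inverse (exp (z \<omega>)) *\<^sub>R v) \<omega>)"
      using cone by (intro lipschitz_on_scaleR_conjugate) auto
    then show "\<exists>L. L-lipschitz_on (range Pc) (\<lambda>v. ?h' v \<omega>)" by (auto simp: exp_minus)
  next
    fix \<omega> assume "\<omega> \<in> space P"
    then show "?h' 0 \<omega> = 0" using fibre by simp
  next
    fix v assume v: "v \<in> range Pc"
    have cont: "continuous_on (range Pc) (\<lambda>v. h v \<omega>)" if "\<omega> \<in> space P" for \<omega>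
      using fibre[OF that] lipschitz_on_continuous_on by blast
    show "(\<lambda>\<omega>. ?h' v \<omega>) \<in> borel_measurable P"
      by (rule borel_measurable_scaleR_conjugate[where S="range Pc", OF z meas cont cone[OF v]])
  next
    fix x show "(\<lambda>\<omega>. infdist x ((\<lambda>x. exp (z \<omega>) *\<^sub>R x) ` ?M \<omega>)) \<in> borel_measurable P"
      by (rule borel_measurable_infdist_scaleR_image[OF z dist])
  next
    fix \<omega> t assume "\<omega> \<in> space P" "0 \<le> (t::real)"
    have cancel: "exp (- z \<omega>) * exp (z \<omega>) = 1"
      by (simp add: exp_add[symmetric])
    have "(\<lambda>x. exp (z (shift t \<omega>)) *\<^sub>R \<phi> t (exp (- z \<omega>) *\<^sub>R x) \<omega>) `
        (\<lambda>x. exp (z \<omega>) *\<^sub>R x) ` ?M \<omega> = (\<lambda>x. exp (z (shift t \<omega>)) *\<^sub>R x) ` (\<lambda>x. \<phi> t x \<omega>) ` ?M \<omega>"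
      by (simp add: image_image cancel)
    then show "(\<lambda>x. exp (z (shift t \<omega>)) *\<^sub>R \<phi> t (exp (- z \<omega>) *\<^sub>R x) \<omega>) `
        (\<lambda>x. exp (z \<omega>) *\<^sub>R x) ` ?M \<omega> \<subseteq> (\<lambda>x. exp (z (shift t \<omega>)) *\<^sub>R x) ` ?M (shift t \<omega>)"
      using image_mono[OF inv[OF \<open>\<omega> \<in> space P\<close> \<open>0 \<le> t\<close>], of "\<lambda>x. exp (z (shift t \<omega>)) *\<^sub>R x"]
      by simp
  qed
qed

theorem theorem3p2:
  fixes T :: "real \<Rightarrow> 'a::{real_inner,banach} \<Rightarrow> 'a"
    and A :: "'a \<Rightarrow> 'a" and D :: "'a set"
    and Pc Pu Ps F :: "'a \<Rightarrow> 'a"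
    and P :: "(real \<Rightarrow> real) measure"
    and \<alpha> \<beta> \<gamma> K \<mu> \<eta> LipG :: real
    and hc :: "'a \<Rightarrow> (real \<Rightarrow> real) \<Rightarrow> 'a"
  assumes separable: "\<exists>S::'a set. countable S \<and> closure S = UNIV"
    and gen: "generates D A T"
    and trich: "exp_trichotomy T Pc Pu Ps \<alpha> \<beta> \<gamma> K"
    and F0: "F 0 = 0"
    and F_lip: "\<exists>LF. LF-lipschitz_on UNIV F"
    and wiener: "wiener_shift_space P"
    and mu: "\<mu> > 0"
    and G_lip: "\<forall>\<omega>\<in>space P. LipG-lipschitz_on UNIV (Gfun \<mu> F \<omega>)"
    and eta: "\<gamma> < \<eta>" "\<eta> < min \<beta> \<alpha>"
    and gap: "K * LipG * (1 / (\<eta> - \<gamma>) + 1 / (\<beta> - \<eta>) + 1 / (\<alpha> - \<eta>)) < 1"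
    and Mc_graph: "\<forall>\<omega>\<in>space P. Mcenter T \<mu> F \<eta> \<omega> = {v + hc v \<omega> | v. v \<in> range Pc}"
    and Mc_cm: "cm_graph P Pc Pu Ps (usol T \<mu> F) hc"
  shows "(\<forall>\<omega>\<in>space P. (\<lambda>x. exp (ou \<mu> \<omega>) *\<^sub>R x) ` Mcenter T \<mu> F \<eta> \<omega> =
            {v + exp (ou \<mu> \<omega>) *\<^sub>R hc (exp (- ou \<mu> \<omega>) *\<^sub>R v) \<omega> | v. v \<in> range Pc})
    \<and> cm_graph P Pc Pu Ps (uhat T \<mu> F) (\<lambda>v \<omega>. exp (ou \<mu> \<omega>) *\<^sub>R hc (exp (- ou \<mu> \<omega>) *\<^sub>R v) \<omega>)
    \<and> (\<forall>\<omega>\<in>space P. \<forall>t\<ge>0.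
         (\<lambda>x. uhat T \<mu> F t x \<omega>) ` ((\<lambda>x. exp (ou \<mu> \<omega>) *\<^sub>R x) ` Mcenter T \<mu> F \<eta> \<omega>)
           \<subseteq> (\<lambda>x. exp (ou \<mu> (shift t \<omega>)) *\<^sub>R x) ` Mcenter T \<mu> F \<eta> (shift t \<omega>))"
proof -
  have lin: "bounded_linear Pc" "bounded_linear Pu" "bounded_linear Ps"
    using trich unfolding exp_trichotomy_def by auto
  let ?h = "\<lambda>v \<omega>. exp (ou \<mu> \<omega>) *\<^sub>R hc (exp (- ou \<mu> \<omega>) *\<^sub>R v) \<omega>"
  let ?M = "\<lambda>\<omega>. {v + ?h v \<omega> | v. v \<in> range Pc}"
  have shift_space: "shift t \<omega> \<in> space P" if "\<omega> \<in> space P" for t \<omega>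
    using wiener that unfolding wiener_shift_space_def by auto
  have graph: "\<forall>\<omega>\<in>space P. (\<lambda>x. exp (ou \<mu> \<omega>) *\<^sub>R x) ` Mcenter T \<mu> F \<eta> \<omega> = ?M \<omega>"
    using Mc_graph scaleR_image_graph[OF lin(1)] by (simp add: exp_minus)
  have "uhat T \<mu> F = (\<lambda>t v \<omega>. exp (ou \<mu> (shift t \<omega>)) *\<^sub>R usol T \<mu> F t (exp (- ou \<mu> \<omega>) *\<^sub>R v) \<omega>)"
    by (simp add: uhat_def fun_eq_iff)
  then have cm: "cm_graph P Pc Pu Ps (uhat T \<mu> F) ?h"
    using cm_graph_conjugate_scaleR[OF lin ou_borel_measurable[OF wiener mu] Mc_cm] by simp
  then have "\<forall>\<omega>\<in>space P. \<forall>t\<ge>0. (\<lambda>x. uhat T \<mu> F t x \<omega>) ` ?M \<omega> \<subseteq> ?M (shift t \<omega>)"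
    unfolding cm_graph_def Let_def by blast
  with graph shift_space show ?thesis
    using cm by simp
qed

end
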